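(* Let $T>0$, $g:[0,T]\to(0,\infty)$ continuous, $x_T\in\mathbb{R}^d$. For continuous $f,h:[0,T]\to\mathbb{R}$, $\mathbf{m}\in\mathbb{R}^d$ and $\gamma\in(0,\infty)$, let $$\mathbf{u}^*_{t,\gamma}(\mathbf{x})=g_te^{\bar f_{t:T}}\frac{x_T-e^{\bar f_{t:T}}\mathbf{x}-\mathbf{m}e^{\bar f_T}\bar h_{t:T}}{\gamma^{-1}+e^{2\bar f_T}\bar g^2_{t:T}}$$ and call the "UniDB forward SDE with hyper-parameters $(f,h,\mathbf{m},\gamma\to\infty)$" the SDE $d\mathbf{x}_t=(f_t\mathbf{x}_t+h_t\mathbf{m}+g_t\lim_{\gamma\to\infty}\mathbf{u}^*_{t,\gamma}(\mathbf{x}_t))dt+g_td\mathbf{w}_t$. Then: (i) (DDBMs (VE)) With $f_t=0$, $h_t=0$, this SDE equals $d\mathbf{x}_t=g_t^2\frac{x_T-\mathbf{x}_t}{\sigma_T^2-\sigma_t^2}dt+g_td\mathbf{w}_t$, where $\sigma_t^2$ satisfies $\frac{d}{dt}\sigma_t^2=g_t^2$. (ii) (DDBMs (VP)) With $f_t=-\frac12g_t^2$, $h_t=0$, this SDE equals $d\mathbf{x}_t=\Big(-\frac12g_t^2\mathbf{x}_t+g_t^2\frac{\frac{\alpha_t}{\alpha_T}x_T-\mathbf{x}_t}{\sigma_t^2(\mathrm{SNR}_t/\mathrm{SNR}_T-1)}\Big)dt+g_td\mathbf{w}_t$, where $\alpha_t=e^{-\frac12\int_0^tg_z^2dz}$,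 $\sigma_t^2=1-\alpha_t^2$ and $\mathrm{SNR}_t=\alpha_t^2/\sigma_t^2$. (iii) (GOUB) With $f_t=-\theta_t$, $h_t=\theta_t$, $\mathbf{m}=x_T$, where $\theta:[0,T]\to(0,\infty)$ is continuous and $g_t^2=2\lambda^2\theta_t$ for a constant $\lambda>0$, this SDE equals $d\mathbf{x}_t=\Big(\theta_t+g_t^2\frac{e^{-2\bar\theta_{t:T}}}{\bar\sigma^2_{t:T}}\Big)(x_T-\mathbf{x}_t)dt+g_td\mathbf{w}_t$, where $\bar\theta_{s:t}=\int_s^t\theta_zdz$ and $\bar\sigma^2_{s:t}=\lambda^2(1-e^{-2\bar\theta_{s:t}})$.
   Context: Notation: $\bar f_{s:t}=\int_s^tf_zdz$, $\bar f_t=\bar f_{0:t}$, $\bar h_{s:t}=\int_s^te^{-\bar f_z}h_zdz$, $\bar g^2_{s:t}=\int_s^te^{-2\bar f_z}g_z^2dz$; $\mathbf{w}_t$ is a standard Brownian motion; all identities are for $t\in[0,T)$. $\mathbf{u}^*_{t,\gamma}$ is the optimal feedback controller for minimizing $\int_0^T\frac12\|\mathbf{u}\|^2dt+\frac\gamma2\|\mathbf{x}^u_T-x_T\|^2$ under $d\mathbf{x}_t=(f_t\mathbf{x}_t+h_t\mathbf{m}+g_t\mathbf{u}_t)dt$. The three target SDEs are the forward processes of the DDBM (VE), DDBM (VP) and GOUB diffusion bridge models (obtained by Doob's $h$-transform). *)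

theory Defs
  imports "HOL-Analysis.Analysis"
begin

definition fbar :: "(real \<Rightarrow> real) \<Rightarrow> real \<Rightarrow> real \<Rightarrow> real" where
  "fbar f s t = integral {s..t} f"

definition hbar :: "(real \<Rightarrow> real) \<Rightarrow> (real \<Rightarrow> real) \<Rightarrow> real \<Rightarrow> real \<Rightarrow> real" where
  "hbar f h s t = integral {s..t} (\<lambda>z. exp (- fbar f 0 z) * h z)"

definition gbar2 :: "(real \<Rightarrow> real) \<Rightarrow> (real \<Rightarrow> real) \<Rightarrow> real \<Rightarrow> real \<Rightarrow> real" where
  "gbar2 f g s t = integral {s..t} (\<lambda>z. exp (- 2 * fbar f 0 z) * (g z)\<^sup>2)"

definition ustar :: "(real \<Rightarrow> real) \<Rightarrow> (real \<Rightarrow> real) \<Rightarrow> (real \<Rightarrow> real) \<Rightarrow> real \<Rightarrow>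
    'a::real_vector \<Rightarrow> 'a \<Rightarrow> real \<Rightarrow> real \<Rightarrow> 'a \<Rightarrow> 'a" where
  "ustar f h g T xT m \<gamma> t x =
     ((g t * exp (fbar f t T)) / (1 / \<gamma> + exp (2 * fbar f 0 T) * gbar2 f g t T)) *\<^sub>R
       (xT - exp (fbar f t T) *\<^sub>R x - (exp (fbar f 0 T) * hbar f h t T) *\<^sub>R m)"

text \<open>Drift of the UniDB forward SDE for finite gamma: f_t x + h_t m + g_t u^*_{t,gamma}(x).
  (The diffusion coefficient is g_t in all SDEs considered.)\<close>
definition unidb_drift :: "(real \<Rightarrow> real) \<Rightarrow> (real \<Rightarrow> real) \<Rightarrow> (real \<Rightarrow> real) \<Rightarrow> real \<Rightarrow>
    'a::real_vector \<Rightarrow> 'a \<Rightarrow> real \<Rightarrow> real \<Rightarrow> 'a \<Rightarrow> 'a" where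
  "unidb_drift f h g T xT m \<gamma> t x = f t *\<^sub>R x + h t *\<^sub>R m + g t *\<^sub>R ustar f h g T xT m \<gamma> t x"

definition vp_alpha :: "(real \<Rightarrow> real) \<Rightarrow> real \<Rightarrow> real" where
  "vp_alpha g t = exp (- (1/2) * integral {0..t} (\<lambda>z. (g z)\<^sup>2))"

definition vp_sigma2 :: "(real \<Rightarrow> real) \<Rightarrow> real \<Rightarrow> real" where
  "vp_sigma2 g t = 1 - (vp_alpha g t)\<^sup>2"

definition vp_snr :: "(real \<Rightarrow> real) \<Rightarrow> real \<Rightarrow> real" where
  "vp_snr g t = (vp_alpha g t)\<^sup>2 / vp_sigma2 g t"

definition thetabar :: "(real \<Rightarrow> real) \<Rightarrow> real \<Rightarrow> real \<Rightarrow> real" where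
  "thetabar \<theta> s t = integral {s..t} \<theta>"

definition goub_sigmabar2 :: "real \<Rightarrow> (real \<Rightarrow> real) \<Rightarrow> real \<Rightarrow> real \<Rightarrow> real" where
  "goub_sigmabar2 lam \<theta> s t = lam\<^sup>2 * (1 - exp (- 2 * thetabar \<theta> s t))"

end

(*
  As gamma tends to infinity the term 1/gamma drops out of the denominator of u*, so the drift
  tends to  f_t x + h_t m + (g_t^2 E / V) (x_T - E x - H m)  with E = e^{fbar_{t:T}},
  V = e^{2 fbar_T} gbar^2_{t:T} = int_t^T e^{2 fbar_{z:T}} g_z^2 dz  and
  H = e^{fbar_T} hbar_{t:T} = int_t^T e^{fbar_{z:T}} h_z dz.  For VE (f = 0), V = sigma_T^2 - sigma_t^2.
  For VP and GOUB, g^2 and h are constant multiples of -f, so V and H are integrals of exact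
  derivatives:  int_t^T e^{k fbar_{z:T}} (-k f_z) dz = 1 - e^{k fbar_{t:T}}.
*)
theory Submission
  imports Defs
begin

lemma fundamental_theorem_of_calculus_real:
  fixes F :: "real \<Rightarrow> real"
  assumes "a \<le> b" "\<And>x. x \<in> {a..b} \<Longrightarrow> (F has_real_derivative F' x) (at x within {a..b})"
  shows "integral {a..b} F' = F b - F a"
  using fundamental_theorem_of_calculus[OF assms(1), of F F'] assms(2)
  by (simp add: has_real_derivative_iff_has_vector_derivative integral_unique)

lemma integral_pos_if_continuous_pos:
  fixes f :: "real \<Rightarrow> real"
  assumes cont: "continuous_on {a..b} f" and "a < b"
    and pos: "\<And>x. x \<in> {a..b} \<Longrightarrow> 0 < f x"
  shows "0 < integral {a..b} f"
proof -
  have nonneg: "\<And>x. x \<in> {a..b} \<Longrightarrow> 0 \<le> f x"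
    using pos by (simp add: less_imp_le)
  have "0 \<le> integral {a..b} f"
    using integral_nonneg[OF integrable_continuous_real[OF cont] nonneg] .
  moreover have "integral {a..b} f \<noteq> 0"
    using integral_eq_0_iff[OF cont \<open>a < b\<close> nonneg] pos \<open>a < b\<close> by fastforce
  ultimately show ?thesis by simp
qed

lemma fbar_diff:
  assumes "f integrable_on {0..T}" "0 \<le> z" "z \<le> T"
  shows "fbar f 0 T - fbar f 0 z = fbar f z T"
  using Henstock_Kurzweil_Integration.integral_combine[OF assms(2,3,1)] by (simp add: fbar_def)

lemma exp_fbar_mult_integral:
  assumes "f integrable_on {0..T}" "0 \<le> t"
  shows "exp (k * fbar f 0 T) * integral {t..T} (\<lambda>z. exp (- k * fbar f 0 z) * \<phi> z)
    = integral {t..T} (\<lambda>z. exp (k * fbar f z T) * \<phi> z)"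
proof -
  have "exp (k * fbar f 0 T) * exp (- k * fbar f 0 z) = exp (k * fbar f z T)" if "z \<in> {t..T}" for z
  proof -
    have "k * fbar f 0 T + - k * fbar f 0 z = k * (fbar f 0 T - fbar f 0 z)" by algebra
    then show ?thesis
      using fbar_diff[OF assms(1), of z] that assms(2) by (simp add: exp_add[symmetric])
  qed
  then have "integral {t..T} (\<lambda>z. exp (k * fbar f 0 T) * (exp (- k * fbar f 0 z) * \<phi> z))
    = integral {t..T} (\<lambda>z. exp (k * fbar f z T) * \<phi> z)"
    by (intro integral_cong) (metis mult.assoc)
  then show ?thesis by simp
qed

lemma exp_fbar_mult_gbar2:
  assumes "f integrable_on {0..T}" "0 \<le> t"
  shows "exp (2 * fbar f 0 T) * gbar2 f g t T = integral {t..T} (\<lambda>z. exp (2 * fbar f z T) * (g z)\<^sup>2)"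
  unfolding gbar2_def by (rule exp_fbar_mult_integral[OF assms])

lemma exp_fbar_mult_hbar:
  assumes "f integrable_on {0..T}" "0 \<le> t"
  shows "exp (fbar f 0 T) * hbar f h t T = integral {t..T} (\<lambda>z. exp (fbar f z T) * h z)"
  using exp_fbar_mult_integral[OF assms, of 1 h] unfolding hbar_def by simp

lemma integral_exp_fbar:
  assumes "continuous_on {0..T} f" "0 \<le> t" "t \<le> T"
  shows "integral {t..T} (\<lambda>z. exp (k * fbar f z T) * (- k * f z)) = 1 - exp (k * fbar f t T)"
proof -
  have "((\<lambda>z. exp (k * fbar f z T)) has_real_derivative exp (k * fbar f z T) * (- k * f z))
      (at z within {t..T})" if "z \<in> {t..T}" for z
  proof -
    have "((\<lambda>z. fbar f z T) has_real_derivative - f z) (at z within {t..T})"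
      unfolding fbar_def
      using integral_has_real_derivative'[OF continuous_on_subset[OF assms(1)] that] assms(2) by auto
    from DERIV_chain2[OF DERIV_exp DERIV_cmult[OF this, of k]] show ?thesis
      by (rule DERIV_cong) simp
  qed
  then have "integral {t..T} (\<lambda>z. exp (k * fbar f z T) * (- k * f z))
      = exp (k * fbar f T T) - exp (k * fbar f t T)"
    by (rule fundamental_theorem_of_calculus_real[OF assms(3)])
  then show ?thesis by (simp add: fbar_def)
qed

lemma unidb_drift_tendsto:
  fixes xT m x :: "'a::real_normed_vector"
  assumes E: "exp (fbar f t T) = E"
    and V: "exp (2 * fbar f 0 T) * gbar2 f g t T = V"
    and H: "exp (fbar f 0 T) * hbar f h t T = H"
    and "V \<noteq> 0"
  shows "((\<lambda>\<gamma>. unidb_drift f h g T xT m \<gamma> t x)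
    \<longlongrightarrow> f t *\<^sub>R x + h t *\<^sub>R m + ((g t)\<^sup>2 * E / V) *\<^sub>R (xT - E *\<^sub>R x - H *\<^sub>R m)) at_top"
proof -
  have "((\<lambda>\<gamma>::real. 1 / \<gamma>) \<longlongrightarrow> 0) at_top"
    using tendsto_inverse_0_at_top[OF filterlim_ident] by (simp add: inverse_eq_divide)
  then have "((\<lambda>\<gamma>. ustar f h g T xT m \<gamma> t x)
      \<longlongrightarrow> (g t * E / (0 + V)) *\<^sub>R (xT - E *\<^sub>R x - H *\<^sub>R m)) at_top"
    unfolding ustar_def E V H using \<open>V \<noteq> 0\<close> by (intro tendsto_intros) auto
  then have "((\<lambda>\<gamma>. unidb_drift f h g T xT m \<gamma> t x)
      \<longlongrightarrow> f t *\<^sub>R x + h t *\<^sub>R m + g t *\<^sub>R ((g t * E / V) *\<^sub>R (xT - E *\<^sub>R x - H *\<^sub>R m))) at_top"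
    unfolding unidb_drift_def by (intro tendsto_intros) simp
  then show ?thesis by (simp add: power2_eq_square mult.assoc)
qed

lemma ddbm_ve_drift_tendsto:
  fixes xT m x :: "'a::real_normed_vector"
  assumes g_cont: "continuous_on {0..T} g" and g_nz: "\<And>z. z \<in> {0..T} \<Longrightarrow> g z \<noteq> 0"
    and s2: "\<And>z. z \<in> {0..T} \<Longrightarrow> (s2 has_real_derivative (g z)\<^sup>2) (at z within {0..T})"
    and t: "0 \<le> t" "t < T"
  shows "((\<lambda>\<gamma>. unidb_drift (\<lambda>_. 0) (\<lambda>_. 0) g T xT m \<gamma> t x)
    \<longlongrightarrow> ((g t)\<^sup>2 / (s2 T - s2 t)) *\<^sub>R (xT - x)) at_top"
proof -
  have fbar_0: "fbar (\<lambda>_. 0) a b = 0" for a b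
    by (simp add: fbar_def)
  have ftc: "integral {t..T} (\<lambda>z. (g z)\<^sup>2) = s2 T - s2 t"
    using t by (intro fundamental_theorem_of_calculus_real has_field_derivative_subset[OF s2]) auto
  then have V: "exp (2 * fbar (\<lambda>_. 0) 0 T) * gbar2 (\<lambda>_. 0) g t T = s2 T - s2 t"
    by (simp add: gbar2_def fbar_0)
  have "0 < integral {t..T} (\<lambda>z. (g z)\<^sup>2)"
    using t g_nz
    by (intro integral_pos_if_continuous_pos continuous_on_subset[OF continuous_on_power[OF g_cont]]) auto
  then have "s2 T - s2 t \<noteq> 0"
    using ftc by simp
  moreover have H: "exp (fbar (\<lambda>_. 0) 0 T) * hbar (\<lambda>_. 0) (\<lambda>_. 0) t T = 0"
    by (simp add: hbar_def)
  ultimately show ?thesis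
    using unidb_drift_tendsto[of "\<lambda>_. 0" t T 1, OF _ V H] by (simp add: fbar_0)
qed

lemma vp_alpha_pos: "0 < vp_alpha g t"
  by (simp add: vp_alpha_def)

lemma vp_sigma2_mult_snr_ratio:
  assumes "vp_alpha g s < 1" "vp_alpha g t < 1"
  shows "vp_sigma2 g s * (vp_snr g s / vp_snr g t - 1)
    = ((vp_alpha g s)\<^sup>2 - (vp_alpha g t)\<^sup>2) / (vp_alpha g t)\<^sup>2"
proof -
  have "(vp_alpha g s)\<^sup>2 < 1" "(vp_alpha g t)\<^sup>2 < 1"
    using assms vp_alpha_pos[of g] by (simp_all add: abs_square_less_1 abs_of_pos)
  then show ?thesis
    using vp_alpha_pos[of g t] unfolding vp_snr_def vp_sigma2_def by (simp add: field_simps)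
qed

lemma ddbm_vp_drift_tendsto:
  fixes xT m x :: "'a::real_normed_vector"
  assumes g_cont: "continuous_on {0..T} g" and g_nz: "\<And>z. z \<in> {0..T} \<Longrightarrow> g z \<noteq> 0"
    and t: "0 < t" "t < T"
  shows "((\<lambda>\<gamma>. unidb_drift (\<lambda>z. - (1/2) * (g z)\<^sup>2) (\<lambda>_. 0) g T xT m \<gamma> t x)
    \<longlongrightarrow> (- (1/2) * (g t)\<^sup>2) *\<^sub>R x
        + ((g t)\<^sup>2 / (vp_sigma2 g t * (vp_snr g t / vp_snr g T - 1))) *\<^sub>R
            ((vp_alpha g t / vp_alpha g T) *\<^sub>R xT - x)) at_top"
proof -
  let ?f = "\<lambda>z. - (1/2) * (g z)\<^sup>2"
  define p q where "p = vp_alpha g t" and "q = vp_alpha g T"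
  have g2_cont: "continuous_on {0..T} (\<lambda>z. (g z)\<^sup>2)"
    using g_cont by (intro continuous_intros)
  have f_cont: "continuous_on {0..T} ?f"
    using g_cont by (intro continuous_intros)
  have g2_pos: "0 < integral {a..b} (\<lambda>z. (g z)\<^sup>2)" if "0 \<le> a" "a < b" "b \<le> T" for a b
    using that g_nz
    by (intro integral_pos_if_continuous_pos continuous_on_subset[OF g2_cont]) auto
  have fbar_f: "fbar ?f a b = - (1/2) * fbar (\<lambda>z. (g z)\<^sup>2) a b" for a b
    by (simp add: fbar_def)
  have alpha: "vp_alpha g u = exp (- (1/2) * fbar (\<lambda>z. (g z)\<^sup>2) 0 u)" for u
    by (simp add: vp_alpha_def fbar_def)
  have "fbar ?f t T = - (1/2) * (fbar (\<lambda>z. (g z)\<^sup>2) 0 T - fbar (\<lambda>z. (g z)\<^sup>2) 0 t)"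
    using fbar_diff[OF integrable_continuous_real[OF g2_cont], of t] t by (simp only: fbar_f)
  then have E: "exp (fbar ?f t T) = q / p"
    by (simp add: p_def q_def alpha right_diff_distrib flip: exp_diff)
  have "exp (2 * fbar ?f 0 T) * gbar2 ?f g t T
      = integral {t..T} (\<lambda>z. exp (2 * fbar ?f z T) * (- 2 * ?f z))"
    using exp_fbar_mult_gbar2[OF integrable_continuous_real[OF f_cont], of t g] t by simp
  also have "\<dots> = 1 - exp (2 * fbar ?f t T)"
    using integral_exp_fbar[OF f_cont, of t 2] t by simp
  also have "\<dots> = 1 - (q / p)\<^sup>2"
    by (simp only: exp_double E)
  finally have V: "exp (2 * fbar ?f 0 T) * gbar2 ?f g t T = 1 - (q / p)\<^sup>2" .
  have H: "exp (fbar ?f 0 T) * hbar ?f (\<lambda>_. 0) t T = 0"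
    by (simp add: hbar_def)
  have p_pos: "0 < p" and q_pos: "0 < q"
    by (simp_all add: p_def q_def vp_alpha_pos)
  have "fbar ?f t T < 0"
    using g2_pos[of t T] t by (simp add: fbar_f fbar_def)
  then have "q / p < 1"
    unfolding E[symmetric] by simp
  then have "q < p"
    using p_pos by (simp add: field_simps)
  have "p < 1"
    using g2_pos[of 0 t] t by (simp add: p_def alpha fbar_def)
  have K: "vp_sigma2 g t * (vp_snr g t / vp_snr g T - 1) = (p\<^sup>2 - q\<^sup>2) / q\<^sup>2"
    using vp_sigma2_mult_snr_ratio[of g t T] \<open>q < p\<close> \<open>p < 1\<close> by (simp add: p_def q_def)
  have "1 - (q / p)\<^sup>2 \<noteq> 0"
    using \<open>q < p\<close> q_pos by (simp add: field_simps)
  from unidb_drift_tendsto[OF E V H this]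
  have lim: "((\<lambda>\<gamma>. unidb_drift ?f (\<lambda>_. 0) g T xT m \<gamma> t x)
      \<longlongrightarrow> ?f t *\<^sub>R x + ((g t)\<^sup>2 * (q / p) / (1 - (q / p)\<^sup>2)) *\<^sub>R (xT - (q / p) *\<^sub>R x)) at_top"
    by simp
  define c where "c = (g t)\<^sup>2 / ((p\<^sup>2 - q\<^sup>2) / q\<^sup>2)"
  have "(g t)\<^sup>2 * (q / p) / (1 - (q / p)\<^sup>2) = c * (p / q)"
    using p_pos q_pos \<open>q < p\<close> by (simp add: c_def field_simps power2_eq_square)
  then have "((g t)\<^sup>2 * (q / p) / (1 - (q / p)\<^sup>2)) *\<^sub>R (xT - (q / p) *\<^sub>R x)
      = (c * (p / q)) *\<^sub>R xT - (c * (p / q) * (q / p)) *\<^sub>R x"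
    by (simp add: scaleR_diff_right)
  also have "\<dots> = c *\<^sub>R ((p / q) *\<^sub>R xT - x)"
    using p_pos q_pos by (simp add: scaleR_diff_right)
  finally show ?thesis
    using lim by (simp add: K c_def flip: p_def q_def)
qed

lemma goub_drift_tendsto:
  fixes xT x :: "'a::real_normed_vector"
  assumes \<theta>_cont: "continuous_on {0..T} \<theta>" and \<theta>_pos: "\<And>z. z \<in> {0..T} \<Longrightarrow> 0 < \<theta> z"
    and "lam \<noteq> 0" and g2: "\<And>z. z \<in> {0..T} \<Longrightarrow> (g z)\<^sup>2 = 2 * lam\<^sup>2 * \<theta> z"
    and t: "0 \<le> t" "t < T"
  shows "((\<lambda>\<gamma>. unidb_drift (\<lambda>z. - \<theta> z) \<theta> g T xT xT \<gamma> t x)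
    \<longlongrightarrow> (\<theta> t + (g t)\<^sup>2 * exp (- 2 * thetabar \<theta> t T) / goub_sigmabar2 lam \<theta> t T)
          *\<^sub>R (xT - x)) at_top"
proof -
  let ?f = "\<lambda>z. - \<theta> z"
  define e where "e = exp (- thetabar \<theta> t T)"
  have f_cont: "continuous_on {0..T} ?f"
    using \<theta>_cont by (intro continuous_intros)
  have f_int: "?f integrable_on {0..T}"
    using integrable_continuous_real[OF f_cont] .
  have fbar_f: "fbar ?f a b = - thetabar \<theta> a b" for a b
    by (simp add: fbar_def thetabar_def)
  have E: "exp (fbar ?f t T) = e"
    by (simp add: fbar_f e_def)
  have "exp (2 * fbar ?f 0 T) * gbar2 ?f g t T
      = integral {t..T} (\<lambda>z. exp (2 * fbar ?f z T) * (g z)\<^sup>2)"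
    using exp_fbar_mult_gbar2[OF f_int t(1)] .
  also have "\<dots> = integral {t..T} (\<lambda>z. lam\<^sup>2 * (exp (2 * fbar ?f z T) * (- 2 * ?f z)))"
    using g2 t by (intro integral_cong) simp
  also have "\<dots> = lam\<^sup>2 * (1 - exp (2 * fbar ?f t T))"
    using integral_exp_fbar[OF f_cont t(1), of 2] t by simp
  also have "\<dots> = goub_sigmabar2 lam \<theta> t T"
    by (simp add: goub_sigmabar2_def fbar_f)
  finally have V: "exp (2 * fbar ?f 0 T) * gbar2 ?f g t T = goub_sigmabar2 lam \<theta> t T" .
  have "exp (fbar ?f 0 T) * hbar ?f \<theta> t T
      = integral {t..T} (\<lambda>z. exp (1 * fbar ?f z T) * (- 1 * ?f z))"
    using exp_fbar_mult_hbar[OF f_int t(1)] by simp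
  also have "\<dots> = 1 - e"
    using integral_exp_fbar[OF f_cont t(1), of 1] t by (simp add: E)
  finally have H: "exp (fbar ?f 0 T) * hbar ?f \<theta> t T = 1 - e" .
  have "0 < thetabar \<theta> t T"
    unfolding thetabar_def using t \<theta>_pos
    by (intro integral_pos_if_continuous_pos continuous_on_subset[OF \<theta>_cont]) auto
  then have "goub_sigmabar2 lam \<theta> t T \<noteq> 0"
    using \<open>lam \<noteq> 0\<close> by (simp add: goub_sigmabar2_def)
  from unidb_drift_tendsto[OF E V H this]
  have lim: "((\<lambda>\<gamma>. unidb_drift ?f \<theta> g T xT xT \<gamma> t x)
      \<longlongrightarrow> ?f t *\<^sub>R x + \<theta> t *\<^sub>R xT + ((g t)\<^sup>2 * e / goub_sigmabar2 lam \<theta> t T) *\<^sub>R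
            (xT - e *\<^sub>R x - (1 - e) *\<^sub>R xT)) at_top" .
  have "exp (- 2 * thetabar \<theta> t T) = e\<^sup>2"
    by (simp add: e_def flip: exp_double)
  moreover have "xT - e *\<^sub>R x - (1 - e) *\<^sub>R xT = e *\<^sub>R (xT - x)"
    by (simp add: algebra_simps)
  ultimately show ?thesis
    using lim by (simp add: algebra_simps power2_eq_square)
qed

theorem proposition4p4:
  fixes T :: real and g :: "real \<Rightarrow> real" and xT :: "'a::euclidean_space"
  assumes T_pos: "T > 0"
    and g_cont: "continuous_on {0..T} g"
    and g_pos: "\<forall>t\<in>{0..T}. g t > 0"
  shows
    \<comment> \<open>(i) DDBM (VE): f = 0, h = 0\<close>
    "(\<forall>s2 :: real \<Rightarrow> real. \<forall>m :: 'a.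
        (\<forall>t\<in>{0..T}. (s2 has_real_derivative (g t)\<^sup>2) (at t within {0..T})) \<longrightarrow>
        (\<forall>t\<in>{0..<T}. \<forall>x :: 'a.
           ((\<lambda>\<gamma>. unidb_drift (\<lambda>_. 0) (\<lambda>_. 0) g T xT m \<gamma> t x)
              \<longlongrightarrow> ((g t)\<^sup>2 / (s2 T - s2 t)) *\<^sub>R (xT - x)) at_top))
     \<and>
    \<comment> \<open>(ii) DDBM (VP): f = -g^2/2, h = 0\<close>
     (\<forall>m :: 'a. \<forall>t\<in>{0<..<T}. \<forall>x :: 'a.
        ((\<lambda>\<gamma>. unidb_drift (\<lambda>z. - (1/2) * (g z)\<^sup>2) (\<lambda>_. 0) g T xT m \<gamma> t x)
           \<longlongrightarrow> (- (1/2) * (g t)\<^sup>2) *\<^sub>R x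
               + ((g t)\<^sup>2 / (vp_sigma2 g t * (vp_snr g t / vp_snr g T - 1))) *\<^sub>R
                   ((vp_alpha g t / vp_alpha g T) *\<^sub>R xT - x)) at_top)
     \<and>
    \<comment> \<open>(iii) GOUB: f = -theta, h = theta, m = xT, g^2 = 2 lam^2 theta\<close>
     (\<forall>(\<theta> :: real \<Rightarrow> real) (lam :: real).
        continuous_on {0..T} \<theta> \<and> (\<forall>t\<in>{0..T}. \<theta> t > 0) \<and> lam > 0 \<and>
        (\<forall>t\<in>{0..T}. (g t)\<^sup>2 = 2 * lam\<^sup>2 * \<theta> t) \<longrightarrow>
        (\<forall>t\<in>{0..<T}. \<forall>x :: 'a.
           ((\<lambda>\<gamma>. unidb_drift (\<lambda>z. - \<theta> z) \<theta> g T xT xT \<gamma> t x)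
              \<longlongrightarrow> (\<theta> t + (g t)\<^sup>2 * exp (- 2 * thetabar \<theta> t T) / goub_sigmabar2 lam \<theta> t T)
                    *\<^sub>R (xT - x)) at_top))"
proof -
  have g_nz: "\<And>z. z \<in> {0..T} \<Longrightarrow> g z \<noteq> 0"
    using g_pos by fastforce
  show ?thesis
    by (intro conjI allI impI ballI;
        rule ddbm_ve_drift_tendsto ddbm_vp_drift_tendsto goub_drift_tendsto)
      (use g_cont g_nz in auto)
qed

end
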